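(* Assume $\rho(x,y)=0$ if and only if $x=y$. For any $D\geq0$ there exists a sequence of sets $C_n^*\subset A^n$ such that (i') $\limsup_{n\to\infty}\frac1n\log M^n(C^*_n)\leq R(D)$; (ii') $P^n([C_n^*]_D)\to1$ as $n\to\infty$; and (iii') $\limsup_{n\to\infty}E_{P^n}[\rho_n(X_1^n,C^*_n)]\leq D$.
   Context: Setting: $A$ is a finite set; $P$ is a probability mass function on $A$ with $P(a)>0$ for all $a$; $\rho:A\times A\to[0,\infty)$; $M:A\to(0,\infty)$. $\rho_n(x_1^n,y_1^n)=\frac1n\sum_{i=1}^n\rho(x_i,y_i)$; $M^n(C)=\sum_{y_1^n\in C}\prod_{i=1}^nM(y_i)$; $P^n$ is the product distribution and $X_1^n\sim P^n$; $\rho_n(x_1^n,C)=\min_{y_1^n\in C}\rho_n(x_1^n,y_1^n)$. The $D$-blowup of $C\subset A^n$ is $[C]_D=\{x_1^n\in A^n:\rho_n(x_1^n,y_1^n)\le D\text{ for some }y_1^n\in C\}$. $H(\mu\|\nu)$ is relative entropy; ${\cal M}(P,Q,D)$ is the set of probability measures $W$ on $A\times A$ with marginals $P$ and $Q$ and $E_W[\rho(X,Y)]\le D$; $I(P,Q,D)=\inf_{W\in{\cal M}(P,Q,D)}H(W\|P\times Q)$ ($+\infty$ if empty); $R(D)=\inf_Q\{I(P,Q,D)+E_Q[\log M(Y)]\}$ over probability distributions $Q$ on $A$. Logarithms are natural. *)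

theory Defs
  imports "HOL-Analysis.Analysis"
begin

text \<open>The finite alphabet A is modelled as a type of class finite (A = UNIV).
 Strings x_1^n in A^n are lists of length n.\<close>

definition strings :: "nat \<Rightarrow> 'a list set" where
  "strings n = {xs. length xs = n}"

definition rho_n :: "('a \<Rightarrow> 'a \<Rightarrow> real) \<Rightarrow> nat \<Rightarrow> 'a list \<Rightarrow> 'a list \<Rightarrow> real" where
  "rho_n \<rho> n xs ys = (1 / real n) * (\<Sum>i<n. \<rho> (xs ! i) (ys ! i))"

text \<open>distance from a string to a set (infinite for the empty set)\<close>
definition rho_n_set :: "('a \<Rightarrow> 'a \<Rightarrow> real) \<Rightarrow> nat \<Rightarrow> 'a list \<Rightarrow> 'a list set \<Rightarrow> ereal" where
  "rho_n_set \<rho> n xs C = (INF ys\<in>C. ereal (rho_n \<rho> n xs ys))"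

definition prod_meas :: "('a \<Rightarrow> real) \<Rightarrow> nat \<Rightarrow> 'a list set \<Rightarrow> real" where
  "prod_meas M n C = (\<Sum>ys\<in>C. \<Prod>i<n. M (ys ! i))"

definition blowup :: "('a \<Rightarrow> 'a \<Rightarrow> real) \<Rightarrow> nat \<Rightarrow> real \<Rightarrow> 'a list set \<Rightarrow> 'a list set" where
  "blowup \<rho> n D C = {xs \<in> strings n. \<exists>ys\<in>C. rho_n \<rho> n xs ys \<le> D}"

definition exp_dist :: "('a \<Rightarrow> real) \<Rightarrow> ('a \<Rightarrow> 'a \<Rightarrow> real) \<Rightarrow> nat \<Rightarrow> 'a list set \<Rightarrow> ereal" where
  "exp_dist P \<rho> n C = (\<Sum>xs\<in>strings n. ereal (\<Prod>i<n. P (xs ! i)) * rho_n_set \<rho> n xs C)"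

definition norm_log_meas :: "('a \<Rightarrow> real) \<Rightarrow> nat \<Rightarrow> 'a list set \<Rightarrow> ereal" where
  "norm_log_meas M n C =
     (if prod_meas M n C = 0 then -\<infinity> else ereal (ln (prod_meas M n C) / real n))"

definition is_pmf :: "('b::finite \<Rightarrow> real) \<Rightarrow> bool" where
  "is_pmf Q \<longleftrightarrow> (\<forall>x. 0 \<le> Q x) \<and> (\<Sum>x\<in>UNIV. Q x) = 1"

definition rel_entropy :: "('b::finite \<Rightarrow> real) \<Rightarrow> ('b \<Rightarrow> real) \<Rightarrow> ereal" where
  "rel_entropy W V =
     (if \<exists>x. W x > 0 \<and> V x = 0 then \<infinity>
      else ereal (\<Sum>x\<in>{x. W x > 0}. W x * ln (W x / V x)))"

definition couplings :: "('a::finite \<Rightarrow> real) \<Rightarrow> ('a \<Rightarrow> real) \<Rightarrow> ('a \<Rightarrow> 'a \<Rightarrow> real) \<Rightarrow> real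
    \<Rightarrow> ('a \<times> 'a \<Rightarrow> real) set" where
  "couplings P Q \<rho> D = {W. is_pmf W \<and> (\<forall>a. (\<Sum>b\<in>UNIV. W (a, b)) = P a)
      \<and> (\<forall>b. (\<Sum>a\<in>UNIV. W (a, b)) = Q b)
      \<and> (\<Sum>ab\<in>UNIV. W ab * \<rho> (fst ab) (snd ab)) \<le> D}"

text \<open>I(P,Q,D); the infimum over the empty set is +infinity\<close>
definition I_PQD :: "('a::finite \<Rightarrow> real) \<Rightarrow> ('a \<Rightarrow> real) \<Rightarrow> ('a \<Rightarrow> 'a \<Rightarrow> real) \<Rightarrow> real \<Rightarrow> ereal" where
  "I_PQD P Q \<rho> D = (INF W\<in>couplings P Q \<rho> D. rel_entropy W (\<lambda>ab. P (fst ab) * Q (snd ab)))"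

definition R_fun :: "('a::finite \<Rightarrow> real) \<Rightarrow> ('a \<Rightarrow> 'a \<Rightarrow> real) \<Rightarrow> ('a \<Rightarrow> real) \<Rightarrow> real \<Rightarrow> ereal" where
  "R_fun P \<rho> M D = (INF Q\<in>{Q. is_pmf Q}. I_PQD P Q \<rho> D + ereal (\<Sum>b\<in>UNIV. Q b * ln (M b)))"

end

(* For a rate r > R(D) choose a coupling W of P and some Q with
   I(W) + E_Q[ln M] < r; mixing W with the diagonal coupling of P makes its expected distortion
   strictly below D (or zero when D = 0) at an arbitrarily small cost in rate. By the weak law of
   large numbers, W^n-random pairs are jointly typical with probability tending to 1, and on
   typical pairs W^n <= exp(n(I(W) + delta)) P^n Q^n. Hence among exp(n(I(W) + 2 delta))
   codewords drawn independently from Q^n, a source word has no typical partner with probability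
   at most its atypical W^n-mass plus exp(-exp(n delta)); so some codebook leaves a vanishing
   P^n-mass uncovered within distortion D. Discarding codewords of M-cost above
   exp(n(E_Q[ln M] + delta)) loses no typical partner and bounds the M^n-measure by about
   exp(n r). A diagonal argument over rates r decreasing to R(D) gives (i') and (ii'), and (iii')
   follows from (ii') since an uncovered word is within distortion max rho of any codeword. *)

theory Submission
  imports Defs "HOL-Real_Asymp.Real_Asymp"
begin

section \<open>Strings and product measures\<close>

definition sample_mean :: "('b \<Rightarrow> real) \<Rightarrow> nat \<Rightarrow> 'b list \<Rightarrow> real" where
  "sample_mean f n xs = (\<Sum>i<n. f (xs ! i)) / real n"

lemma finite_strings: "finite (strings n :: 'a::finite list set)"
  unfolding strings_def using finite_lists_length_eq[of "UNIV :: 'a set" n] by simp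

lemma finite_strings_Collect: "finite {xs \<in> strings n. Prop (xs :: 'a::finite list)}"
  by (rule finite_subset[OF _ finite_strings]) auto

lemma sum_prod_strings:
  fixes f :: "nat \<Rightarrow> 'b::finite \<Rightarrow> 'c::comm_semiring_1"
  shows "(\<Sum>xs\<in>strings n. \<Prod>i<n. f i (xs ! i)) = (\<Prod>i<n. \<Sum>b\<in>UNIV. f i b)"
proof -
  have "(\<Prod>i<n. \<Sum>b\<in>UNIV. f i b) = (\<Sum>g\<in>{..<n} \<rightarrow>\<^sub>E UNIV. \<Prod>i<n. f i (g i))"
    by (rule prod_sum_PiE) auto
  also have "\<dots> = (\<Sum>xs\<in>strings n. \<Prod>i<n. f i (xs ! i))"
    by (rule sum.reindex_bij_witness[of _ "\<lambda>xs. restrict ((!) xs) {..<n}" "\<lambda>g. map g [0..<n]"])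
       (auto simp: strings_def PiE_def extensional_def intro: nth_equalityI)
  finally show ?thesis ..
qed

lemma prod_meas_strings:
  fixes p :: "'b::finite \<Rightarrow> real"
  assumes "(\<Sum>b\<in>UNIV. p b) = 1"
  shows "prod_meas p n (strings n) = 1"
  using sum_prod_strings[of "\<lambda>_. p" n] assms by (simp add: prod_meas_def)

lemma prod_meas_nonneg: "(\<And>b. 0 \<le> p b) \<Longrightarrow> 0 \<le> prod_meas p n S"
  unfolding prod_meas_def by (intro sum_nonneg prod_nonneg) auto

lemma prod_meas_mono:
  "(\<And>b. 0 \<le> p b) \<Longrightarrow> S \<subseteq> T \<Longrightarrow> finite T \<Longrightarrow> prod_meas p n S \<le> prod_meas p n T"
  unfolding prod_meas_def by (intro sum_mono2 prod_nonneg) auto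

lemma prod_meas_Diff:
  fixes p :: "'b::finite \<Rightarrow> real"
  assumes "(\<Sum>b\<in>UNIV. p b) = 1" and "S \<subseteq> strings n"
  shows "prod_meas p n (strings n - S) = 1 - prod_meas p n S"
  using sum.subset_diff[OF assms(2) finite_strings, of "\<lambda>xs. \<Prod>i<n. p (xs ! i)"]
    prod_meas_strings[OF assms(1), of n]
  by (simp add: prod_meas_def)

lemma prod_meas_Un_le:
  assumes "\<And>b. 0 \<le> p b" "finite S" "finite T"
  shows "prod_meas p n (S \<union> T) \<le> prod_meas p n S + prod_meas p n T"
  using sum_Un[OF assms(2,3), of "\<lambda>xs. \<Prod>i<n. p (xs ! i)"]
    prod_meas_nonneg[where p = p and n = n and S = "S \<inter> T", OF assms(1)]
  by (simp add: prod_meas_def)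

lemma sum_strings_pairs:
  fixes F :: "'a list \<Rightarrow> 'b list \<Rightarrow> 'c::comm_monoid_add"
  shows "(\<Sum>x\<in>strings n. \<Sum>y\<in>strings n. F x y) = (\<Sum>zs\<in>strings n. F (map fst zs) (map snd zs))"
proof -
  have "(\<Sum>zs\<in>strings n. F (map fst zs) (map snd zs)) = (\<Sum>(x, y)\<in>strings n \<times> strings n. F x y)"
    by (rule sum.reindex_bij_witness[of _ "\<lambda>(x, y). zip x y" "\<lambda>zs. (map fst zs, map snd zs)"])
       (auto simp: strings_def zip_map_fst_snd)
  then show ?thesis
    by (simp add: sum.cartesian_product)
qed

lemma prod_meas_zip:
  fixes W :: "'a::finite \<times> 'b::finite \<Rightarrow> real"
  shows "prod_meas W n {zs \<in> strings n. T zs}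
    = (\<Sum>x\<in>strings n. \<Sum>y\<in>{y \<in> strings n. T (zip x y)}. \<Prod>i<n. W (x ! i, y ! i))"
proof -
  have "(\<Sum>x\<in>strings n. \<Sum>y\<in>{y \<in> strings n. T (zip x y)}. \<Prod>i<n. W (x ! i, y ! i))
      = (\<Sum>x\<in>strings n. \<Sum>y\<in>strings n. if T (zip x y) then \<Prod>i<n. W (x ! i, y ! i) else 0)"
    by (simp add: sum.inter_filter[OF finite_strings])
  also have "\<dots> = (\<Sum>zs\<in>strings n. if T zs then \<Prod>i<n. W (zs ! i) else 0)"
    unfolding sum_strings_pairs
    by (intro sum.cong refl) (auto simp: zip_map_fst_snd strings_def intro!: prod.cong)
  finally show ?thesis
    by (simp add: prod_meas_def sum.inter_filter[OF finite_strings])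
qed

lemma prod_meas_le_card:
  assumes "\<And>y. y \<in> C \<Longrightarrow> (\<Prod>i<n. M (y ! i)) \<le> b"
  shows "prod_meas M n C \<le> real (card C) * b"
  using sum_mono[of C "\<lambda>y. \<Prod>i<n. M (y ! i)" "\<lambda>_. b"] assms by (simp add: prod_meas_def)

lemma rho_n_eq_sample_mean:
  "length x = n \<Longrightarrow> length y = n \<Longrightarrow> rho_n \<rho> n x y = sample_mean (case_prod \<rho>) n (zip x y)"
  by (simp add: rho_n_def sample_mean_def)

lemma norm_log_meas_le_exp:
  assumes "n \<ge> 1" "\<And>b. 0 \<le> M b" "prod_meas M n C \<le> c * exp (real n * r)" "0 < c"
    "ln c \<le> real n * \<epsilon>"
  shows "norm_log_meas M n C \<le> ereal (r + \<epsilon>)"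
proof (cases "prod_meas M n C = 0")
  case False
  then have pos: "0 < prod_meas M n C"
    using prod_meas_nonneg[OF assms(2)] by (simp add: less_le)
  have "ln (prod_meas M n C) \<le> ln (c * exp (real n * r))"
    using assms(3,4) pos by simp
  also have "\<dots> \<le> real n * (r + \<epsilon>)"
    using assms(4,5) by (simp add: ln_mult algebra_simps)
  finally show ?thesis
    using False assms(1) by (simp add: norm_log_meas_def field_simps)
qed (simp add: norm_log_meas_def)

section \<open>The weak law of large numbers\<close>

lemma second_moment_strings:
  fixes p g :: "'b::finite \<Rightarrow> real"
  assumes p1: "(\<Sum>b\<in>UNIV. p b) = 1" and centred: "(\<Sum>b\<in>UNIV. p b * g b) = 0"
  shows "(\<Sum>xs\<in>strings n. (\<Prod>k<n. p (xs ! k)) * (\<Sum>i<n. g (xs ! i))\<^sup>2)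
         = real n * (\<Sum>b\<in>UNIV. p b * (g b)\<^sup>2)"
proof -
  define V where "V = (\<Sum>b\<in>UNIV. p b * (g b)\<^sup>2)"
  have cross: "(\<Sum>xs\<in>strings n. (\<Prod>k<n. p (xs ! k)) * (g (xs ! i) * g (xs ! j)))
       = (if i = j then V else 0)" if "i < n" "j < n" for i j
  proof -
    define F where "F k b = p b * (if k = i then g b else 1) * (if k = j then g b else 1)" for k b
    have "(\<Sum>xs\<in>strings n. (\<Prod>k<n. p (xs ! k)) * (g (xs ! i) * g (xs ! j)))
        = (\<Sum>xs\<in>strings n. \<Prod>k<n. F k (xs ! k))"
      using that by (intro sum.cong refl) (simp add: F_def prod.distrib prod.delta)
    also have "\<dots> = (\<Prod>k<n. \<Sum>b\<in>UNIV. F k b)"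
      by (rule sum_prod_strings)
    also have "\<dots> = (\<Prod>k<n. if k = i \<and> k = j then V else if k = i \<or> k = j then 0 else 1)"
      using p1 centred
      by (intro prod.cong refl) (auto simp: F_def V_def power2_eq_square mult.assoc mult.left_commute)
    also have "\<dots> = (if i = j then V else 0)"
    proof (cases "i = j")
      case True
      then show ?thesis
        using that by (simp add: prod.delta flip: prod.cong[OF refl, of _ "\<lambda>k. if k = i then V else 1"])
    qed (use that in \<open>auto intro: prod_zero\<close>)
    finally show ?thesis .
  qed
  have "(\<Sum>xs\<in>strings n. (\<Prod>k<n. p (xs ! k)) * (\<Sum>i<n. g (xs ! i))\<^sup>2)
      = (\<Sum>xs\<in>strings n. \<Sum>i<n. \<Sum>j<n. (\<Prod>k<n. p (xs ! k)) * (g (xs ! i) * g (xs ! j)))"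
    unfolding power2_eq_square sum_product by (simp add: sum_distrib_left)
  also have "\<dots> = (\<Sum>i<n. \<Sum>j<n. \<Sum>xs\<in>strings n. (\<Prod>k<n. p (xs ! k)) * (g (xs ! i) * g (xs ! j)))"
    by (simp only: sum.swap[of _ "strings n"])
  also have "\<dots> = real n * V"
    by (simp add: cross)
  finally show ?thesis unfolding V_def .
qed

lemma chebyshev_strings:
  fixes p h :: "'b::finite \<Rightarrow> real"
  assumes "is_pmf p" and "\<delta> > 0" and "n \<ge> 1"
  defines "\<mu> \<equiv> \<Sum>b\<in>UNIV. p b * h b"
  shows "prod_meas p n {xs \<in> strings n. \<delta> \<le> \<bar>sample_mean h n xs - \<mu>\<bar>}
         \<le> (\<Sum>b\<in>UNIV. p b * (h b - \<mu>)\<^sup>2) / (real n * \<delta>\<^sup>2)"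
proof -
  have p0: "0 \<le> p b" for b
    using assms(1) by (simp add: is_pmf_def)
  have p1: "(\<Sum>b\<in>UNIV. p b) = 1"
    using assms(1) by (simp add: is_pmf_def)
  define g where "g b = h b - \<mu>" for b
  have centred: "(\<Sum>b\<in>UNIV. p b * g b) = 0"
    using p1 by (simp add: g_def \<mu>_def right_diff_distrib sum_subtractf flip: sum_distrib_right)
  have deviation: "1 \<le> (\<Sum>i<n. g (xs ! i))\<^sup>2 / (real n * \<delta>)\<^sup>2"
    if "\<delta> \<le> \<bar>sample_mean h n xs - \<mu>\<bar>" for xs
  proof -
    have "(\<Sum>i<n. g (xs ! i)) = real n * (sample_mean h n xs - \<mu>)"
      using \<open>n \<ge> 1\<close> by (simp add: g_def sum_subtractf sample_mean_def field_simps)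
    then have "real n * \<delta> \<le> \<bar>\<Sum>i<n. g (xs ! i)\<bar>"
      using that by (simp add: abs_mult mult_left_mono)
    then have "(real n * \<delta>)\<^sup>2 \<le> (\<Sum>i<n. g (xs ! i))\<^sup>2"
      using \<open>\<delta> > 0\<close> by (metis abs_le_square_iff abs_of_nonneg less_imp_le of_nat_0_le_iff
          mult_nonneg_nonneg)
    then show ?thesis
      using \<open>n \<ge> 1\<close> \<open>\<delta> > 0\<close> by simp
  qed
  have "prod_meas p n {xs \<in> strings n. \<delta> \<le> \<bar>sample_mean h n xs - \<mu>\<bar>}
      \<le> (\<Sum>xs\<in>strings n. (\<Prod>k<n. p (xs ! k)) * ((\<Sum>i<n. g (xs ! i))\<^sup>2 / (real n * \<delta>)\<^sup>2))"
    unfolding prod_meas_def sum.inter_filter[OF finite_strings]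
    using deviation p0 mult_left_mono[OF deviation, of _ "\<Prod>k<n. p (_ ! k)"]
    by (intro sum_mono) (auto simp: prod_nonneg)
  also have "\<dots> = real n * (\<Sum>b\<in>UNIV. p b * (g b)\<^sup>2) / (real n * \<delta>)\<^sup>2"
    using second_moment_strings[OF p1 centred, of n] by (simp flip: sum_divide_distrib)
  also have "\<dots> = (\<Sum>b\<in>UNIV. p b * (h b - \<mu>)\<^sup>2) / (real n * \<delta>\<^sup>2)"
    using \<open>n \<ge> 1\<close> by (simp add: g_def power2_eq_square)
  finally show ?thesis .
qed

lemma weak_law_of_large_numbers:
  fixes p h :: "'b::finite \<Rightarrow> real"
  assumes "is_pmf p" and "\<delta> > 0"
  shows "(\<lambda>n. prod_meas p n {xs \<in> strings n. \<delta> \<le> \<bar>sample_mean h n xs - (\<Sum>b\<in>UNIV. p b * h b)\<bar>})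
           \<longlonglongrightarrow> 0"
proof (rule tendsto_sandwich)
  define V where "V = (\<Sum>b\<in>UNIV. p b * (h b - (\<Sum>b\<in>UNIV. p b * h b))\<^sup>2)"
  show "\<forall>\<^sub>F n in sequentially. 0 \<le> prod_meas p n {xs \<in> strings n. \<delta> \<le> \<bar>sample_mean h n xs - (\<Sum>b\<in>UNIV. p b * h b)\<bar>}"
    using assms(1) by (simp add: is_pmf_def prod_meas_nonneg)
  show "\<forall>\<^sub>F n in sequentially. prod_meas p n {xs \<in> strings n. \<delta> \<le> \<bar>sample_mean h n xs - (\<Sum>b\<in>UNIV. p b * h b)\<bar>}
      \<le> V / \<delta>\<^sup>2 * inverse (real n)"
    using eventually_ge_at_top[of 1]
    by eventually_elim (use chebyshev_strings[OF assms] in \<open>simp add: V_def field_simps\<close>)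
  show "(\<lambda>n. V / \<delta>\<^sup>2 * inverse (real n)) \<longlonglongrightarrow> 0"
    by (intro tendsto_mult_right_zero lim_inverse_n)
qed simp

lemma distortion_exceedance_vanishes:
  fixes p r :: "'b::finite \<Rightarrow> real"
  assumes "is_pmf p"
    and "(\<Sum>z\<in>UNIV. p z * r z) < D \<or> (0 \<le> D \<and> (\<forall>z. 0 < p z \<longrightarrow> r z = 0))"
  shows "(\<lambda>n. prod_meas p n {zs \<in> strings n. D < sample_mean r n zs}) \<longlonglongrightarrow> 0"
  using assms(2)
proof
  define E where "E = (\<Sum>z\<in>UNIV. p z * r z)"
  assume "E < D"
  show ?thesis
  proof (rule Lim_null_comparison)
    show "(\<lambda>n. prod_meas p n {zs \<in> strings n. D - E \<le> \<bar>sample_mean r n zs - E\<bar>}) \<longlonglongrightarrow> 0"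
      using weak_law_of_large_numbers[OF assms(1), of "D - E" r] \<open>E < D\<close> by (simp add: E_def)
    show "\<forall>\<^sub>F n in sequentially. norm (prod_meas p n {zs \<in> strings n. D < sample_mean r n zs})
        \<le> prod_meas p n {zs \<in> strings n. D - E \<le> \<bar>sample_mean r n zs - E\<bar>}"
      using assms(1) by (intro always_eventually allI)
        (auto simp: is_pmf_def prod_meas_nonneg intro!: prod_meas_mono finite_subset[OF _ finite_strings])
  qed
next
  assume zero: "0 \<le> D \<and> (\<forall>z. 0 < p z \<longrightarrow> r z = 0)"
  have "(\<Prod>i<n. p (zs ! i)) = 0" if "D < sample_mean r n zs" for n zs
  proof (rule ccontr)
    assume "(\<Prod>i<n. p (zs ! i)) \<noteq> 0"
    then have "\<forall>i<n. 0 < p (zs ! i)"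
      using assms(1) by (auto simp: is_pmf_def less_le)
    then have "sample_mean r n zs = 0"
      using zero by (simp add: sample_mean_def)
    then show False
      using that zero by simp
  qed
  then have "prod_meas p n {zs \<in> strings n. D < sample_mean r n zs} = 0" for n
    unfolding prod_meas_def by (intro sum.neutral) auto
  then show ?thesis
    by simp
qed

section \<open>Random covering\<close>

lemma power_convex_combination_le:
  fixes b u :: real
  assumes "0 \<le> b" "b \<le> 1" "0 \<le> u" "u \<le> 1"
  shows "(1 - b + b * u) ^ N \<le> 1 - b + b * u ^ N"
proof (induction N)
  case (Suc N)
  have "0 \<le> 1 - b + b * u"
    using assms by (simp add: mult_le_one add_increasing2)
  then have "(1 - b + b * u) ^ Suc N \<le> (1 - b + b * u) * (1 - b + b * u ^ N)"
    using Suc.IH by (simp add: mult_left_mono)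
  also have "\<dots> = 1 - b + b * u ^ Suc N - b * (1 - b) * (1 - u) * (1 - u ^ N)"
    by (simp add: algebra_simps)
  also have "\<dots> \<le> 1 - b + b * u ^ Suc N"
    using assms by (simp add: power_le_one)
  finally show ?case .
qed simp

lemma miss_probability_le:
  fixes p g q K :: real
  assumes "0 \<le> g" "g \<le> p" "g \<le> K * p * q" "q \<le> 1" "1 \<le> K"
  shows "p * (1 - q) ^ N \<le> (p - g) + p * exp (- real N / K)"
proof (cases "p = 0")
  case False
  define u where "u = g / p"
  define a where "a = 1 / K"
  have p: "p > 0" and u: "0 \<le> u" "u \<le> 1" and a: "0 < a" "a \<le> 1"
    using assms False by (auto simp: u_def a_def)
  have "a * u \<le> q"
    using assms p by (simp add: u_def a_def field_simps)
  then have "(1 - q) ^ N \<le> (1 - u + u * (1 - a)) ^ N"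
    using assms by (intro power_mono) (auto simp: algebra_simps)
  also have "\<dots> \<le> 1 - u + u * (1 - a) ^ N"
    using u a by (intro power_convex_combination_le) auto
  also have "\<dots> \<le> 1 - u + exp (- a) ^ N"
    using u a mult_left_le_one_le[of "(1 - a) ^ N" u]
      power_mono[of "1 - a" "exp (- a)" N] exp_ge_add_one_self[of "- a"]
    by auto
  also have "exp (- a) ^ N = exp (- real N / K)"
    by (simp add: a_def flip: exp_of_nat_mult)
  finally have "p * (1 - q) ^ N \<le> p * (1 - u + exp (- real N / K))"
    using p by (simp add: mult_left_mono)
  then show ?thesis
    using p by (simp add: u_def algebra_simps)
qed (use assms in simp)

lemma convex_combination_ex_le:
  fixes w f :: "'c \<Rightarrow> real"
  assumes "finite S" "\<forall>s\<in>S. 0 \<le> w s" "(\<Sum>s\<in>S. w s) = 1" "(\<Sum>s\<in>S. w s * f s) \<le> B"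
  shows "\<exists>s\<in>S. f s \<le> B"
proof (rule ccontr)
  assume all_gt: "\<not> ?thesis"
  obtain s where "s \<in> S" "w s > 0"
    using assms(1-3) by (metis less_eq_real_def sum_nonneg_eq_0_iff zero_neq_one)
  moreover have "B < f s"
    using all_gt \<open>s \<in> S\<close> by force
  ultimately have "\<exists>s\<in>S. w s * B < w s * f s"
    by (meson mult_strict_left_mono)
  then have "(\<Sum>s\<in>S. w s * B) < (\<Sum>s\<in>S. w s * f s)"
    using all_gt assms(1,2) by (intro sum_strict_mono_ex1) (auto intro!: mult_left_mono)
  then show False
    using assms(3,4) by (simp flip: sum_distrib_right)
qed

lemma sum_filter_not:
  fixes f :: "'a \<Rightarrow> 'b::ab_group_add"
  assumes "finite A"
  shows "(\<Sum>x\<in>{x\<in>A. \<not> G x}. f x) = (\<Sum>x\<in>A. f x) - (\<Sum>x\<in>{x\<in>A. G x}. f x)"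
proof -
  have "(\<Sum>x\<in>{x\<in>A. G x}. f x) + (\<Sum>x\<in>{x\<in>A. \<not> G x}. f x) = (\<Sum>x\<in>A. f x)"
    using assms by (subst sum.union_disjoint[symmetric]) (auto intro: sum.cong)
  then show ?thesis
    by (simp add: algebra_simps)
qed

lemma sum_PiE_prod_all_avoid:
  fixes q :: "'y \<Rightarrow> real"
  assumes "finite Y"
  shows "(\<Sum>c\<in>{..<N} \<rightarrow>\<^sub>E Y. (\<Prod>j<N. q (c j)) * (if \<forall>j<N. \<not> G (c j) then 1 else 0))
    = (\<Sum>y\<in>{y\<in>Y. \<not> G y}. q y) ^ N"
proof -
  have "(\<Prod>j<N. q (c j)) * (if \<forall>j<N. \<not> G (c j) then 1 else 0)
      = (\<Prod>j<N. if \<not> G (c j) then q (c j) else 0)" for c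
    by (auto intro: prod_zero)
  then have "(\<Sum>c\<in>{..<N} \<rightarrow>\<^sub>E Y. (\<Prod>j<N. q (c j)) * (if \<forall>j<N. \<not> G (c j) then 1 else 0))
      = (\<Sum>c\<in>{..<N} \<rightarrow>\<^sub>E Y. \<Prod>j<N. if \<not> G (c j) then q (c j) else 0)"
    by simp
  also have "\<dots> = (\<Prod>j<N. \<Sum>y\<in>Y. if \<not> G y then q y else 0)"
    using assms by (intro prod_sum_PiE[symmetric]) auto
  also have "\<dots> = (\<Sum>y\<in>{y\<in>Y. \<not> G y}. q y) ^ N"
    using assms by (simp add: sum.inter_filter)
  finally show ?thesis .
qed

text \<open>Average over codebooks of N words drawn independently from q: the codebook contains no y
  with \<open>good x y\<close> with probability (1 - q(good x))^N, and the density bound makes q(good x)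
  at least 1/K times the w-mass of good x relative to p x.\<close>

lemma random_covering:
  fixes p :: "'x \<Rightarrow> real" and q :: "'y \<Rightarrow> real" and w :: "'x \<Rightarrow> 'y \<Rightarrow> real"
  assumes "finite X" "finite Y"
    and q_nonneg: "\<forall>y\<in>Y. 0 \<le> q y" and q_sum: "(\<Sum>y\<in>Y. q y) = 1"
    and w_nonneg: "\<forall>x\<in>X. \<forall>y\<in>Y. 0 \<le> w x y" and w_marginal: "\<forall>x\<in>X. (\<Sum>y\<in>Y. w x y) = p x"
    and p_sum: "(\<Sum>x\<in>X. p x) = 1"
    and "1 \<le> K" and density: "\<forall>x\<in>X. \<forall>y\<in>Y. good x y \<longrightarrow> w x y \<le> K * p x * q y"
  shows "\<exists>c \<in> {..<N} \<rightarrow>\<^sub>E Y. (\<Sum>x\<in>{x\<in>X. \<forall>j<N. \<not> good x (c j)}. p x)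
           \<le> (\<Sum>x\<in>X. \<Sum>y\<in>{y\<in>Y. \<not> good x y}. w x y) + exp (- real N / K)"
proof (rule convex_combination_ex_le)
  define weight where "weight c = (\<Prod>j<N. q (c j))" for c :: "nat \<Rightarrow> 'y"
  show "finite ({..<N} \<rightarrow>\<^sub>E Y)"
    using \<open>finite Y\<close> by (simp add: finite_PiE)
  show "\<forall>c\<in>{..<N} \<rightarrow>\<^sub>E Y. 0 \<le> weight c"
    using q_nonneg by (auto simp: weight_def PiE_def intro!: prod_nonneg)
  show "(\<Sum>c\<in>{..<N} \<rightarrow>\<^sub>E Y. weight c) = 1"
    using prod_sum_PiE[of "{..<N}" "\<lambda>_. Y" "\<lambda>_. q"] \<open>finite Y\<close> q_sum by (simp add: weight_def)
  have "(\<Sum>c\<in>{..<N} \<rightarrow>\<^sub>E Y. weight c * (\<Sum>x\<in>{x\<in>X. \<forall>j<N. \<not> good x (c j)}. p x))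
      = (\<Sum>c\<in>{..<N} \<rightarrow>\<^sub>E Y. \<Sum>x\<in>X. p x * (weight c * (if \<forall>j<N. \<not> good x (c j) then 1 else 0)))"
    unfolding sum.inter_filter[OF \<open>finite X\<close>] sum_distrib_left
    by (intro sum.cong refl) (auto simp: mult.commute)
  also have "\<dots> = (\<Sum>x\<in>X. p x * (\<Sum>c\<in>{..<N} \<rightarrow>\<^sub>E Y. weight c * (if \<forall>j<N. \<not> good x (c j) then 1 else 0)))"
    by (subst sum.swap) (simp add: sum_distrib_left)
  also have "\<dots> = (\<Sum>x\<in>X. p x * (1 - (\<Sum>y\<in>{y\<in>Y. good x y}. q y)) ^ N)"
    unfolding weight_def sum_PiE_prod_all_avoid[OF \<open>finite Y\<close>] sum_filter_not[OF \<open>finite Y\<close>] q_sum ..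
  also have "\<dots> \<le> (\<Sum>x\<in>X. (p x - (\<Sum>y\<in>{y\<in>Y. good x y}. w x y)) + p x * exp (- real N / K))"
  proof (intro sum_mono miss_probability_le)
    fix x assume x: "x \<in> X"
    show "0 \<le> (\<Sum>y\<in>{y\<in>Y. good x y}. w x y)"
      using w_nonneg x by (intro sum_nonneg) auto
    show "(\<Sum>y\<in>{y\<in>Y. good x y}. w x y) \<le> p x"
      using w_nonneg x w_marginal[rule_format, OF x, symmetric] \<open>finite Y\<close>
      by (auto intro!: sum_mono2)
    show "(\<Sum>y\<in>{y\<in>Y. good x y}. w x y) \<le> K * p x * (\<Sum>y\<in>{y\<in>Y. good x y}. q y)"
      using density x by (auto simp: sum_distrib_left intro!: sum_mono)
    show "(\<Sum>y\<in>{y\<in>Y. good x y}. q y) \<le> 1"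
      using q_nonneg \<open>finite Y\<close> sum_mono2[of Y "{y\<in>Y. good x y}" q] by (simp add: q_sum)
  qed (use \<open>1 \<le> K\<close> in simp)
  also have "\<dots> = (\<Sum>x\<in>X. \<Sum>y\<in>{y\<in>Y. \<not> good x y}. w x y) + exp (- real N / K)"
    using w_marginal p_sum
    by (simp add: sum_filter_not[OF \<open>finite Y\<close>] sum.distrib flip: sum_distrib_right)
  finally show "(\<Sum>c\<in>{..<N} \<rightarrow>\<^sub>E Y. weight c * (\<Sum>x\<in>{x\<in>X. \<forall>j<N. \<not> good x (c j)}. p x))
      \<le> (\<Sum>x\<in>X. \<Sum>y\<in>{y\<in>Y. \<not> good x y}. w x y) + exp (- real N / K)" .
qed

section \<open>Couplings and mutual information\<close>

text \<open>The log-likelihood ratio of W against P \<times> Q; its value 0 where W vanishes is arbitrary,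
  as such pairs carry no W-mass.\<close>

definition info_density :: "('a \<Rightarrow> real) \<Rightarrow> ('b \<Rightarrow> real) \<Rightarrow> ('a \<times> 'b \<Rightarrow> real) \<Rightarrow> 'a \<times> 'b \<Rightarrow> real"
  where "info_density P Q W z = (if 0 < W z then ln (W z / (P (fst z) * Q (snd z))) else 0)"

definition mutual_info :: "('a::finite \<Rightarrow> real) \<Rightarrow> ('b::finite \<Rightarrow> real) \<Rightarrow> ('a \<times> 'b \<Rightarrow> real) \<Rightarrow> real"
  where "mutual_info P Q W = (\<Sum>z\<in>UNIV. W z * info_density P Q W z)"

lemma sum_UNIV_prod:
  "(\<Sum>z\<in>UNIV. f z) = (\<Sum>a\<in>UNIV. \<Sum>b\<in>UNIV. f (a, b))"
  for f :: "'a::finite \<times> 'b::finite \<Rightarrow> 'c::comm_monoid_add"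
  by (simp add: sum.cartesian_product UNIV_Times_UNIV[symmetric] del: UNIV_Times_UNIV)

locale finite_coupling =
  fixes P Q :: "'a::finite \<Rightarrow> real" and W :: "'a \<times> 'a \<Rightarrow> real"
  assumes W_nonneg: "0 \<le> W z"
    and marginal_fst: "(\<Sum>b\<in>UNIV. W (a, b)) = P a"
    and marginal_snd: "(\<Sum>a\<in>UNIV. W (a, b)) = Q b"
    and P_sum: "(\<Sum>a\<in>UNIV. P a) = 1"
begin

lemma W_le_P: "W z \<le> P (fst z)"
  using member_le_sum[of "snd z" UNIV "\<lambda>b. W (fst z, b)"] W_nonneg by (simp add: marginal_fst)

lemma W_le_Q: "W z \<le> Q (snd z)"
  using member_le_sum[of "fst z" UNIV "\<lambda>a. W (a, snd z)"] W_nonneg by (simp add: marginal_snd)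

lemma P_nonneg: "0 \<le> P a"
  using order_trans[OF W_nonneg W_le_P, of "(a, a)"] by simp

lemma Q_nonneg: "0 \<le> Q b"
  using order_trans[OF W_nonneg W_le_Q, of "(b, b)"] by simp

lemma W_sum: "(\<Sum>z\<in>UNIV. W z) = 1"
  by (simp add: sum_UNIV_prod marginal_fst P_sum)

lemma Q_sum: "(\<Sum>b\<in>UNIV. Q b) = 1"
proof -
  have "(\<Sum>b\<in>UNIV. Q b) = (\<Sum>b\<in>UNIV. \<Sum>a\<in>UNIV. W (a, b))"
    by (simp add: marginal_snd)
  also have "\<dots> = (\<Sum>a\<in>UNIV. \<Sum>b\<in>UNIV. W (a, b))"
    by (rule sum.swap)
  finally show ?thesis
    using W_sum by (simp add: sum_UNIV_prod)
qed

lemma is_pmf_W: "is_pmf W"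
  using W_nonneg W_sum by (simp add: is_pmf_def)

lemma mean_snd: "(\<Sum>z\<in>UNIV. W z * f (snd z)) = (\<Sum>b\<in>UNIV. Q b * f b)"
  unfolding sum_UNIV_prod by (subst sum.swap) (simp add: marginal_snd flip: sum_distrib_right)

lemma W_eq_exp_info_density:
  assumes "0 < W z"
  shows "W z = P (fst z) * Q (snd z) * exp (info_density P Q W z)"
proof -
  have "0 < P (fst z)" "0 < Q (snd z)"
    using assms W_le_P[of z] W_le_Q[of z] by auto
  then show ?thesis
    using assms by (simp add: info_density_def)
qed

lemma mutual_info_nonneg: "0 \<le> mutual_info P Q W"
proof -
  have "W z - P (fst z) * Q (snd z) \<le> W z * info_density P Q W z" for z
  proof (cases "0 < W z")
    case True
    define u where "u = exp (- info_density P Q W z)"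
    have "W z * (1 - u) = W z - P (fst z) * Q (snd z)"
      using W_eq_exp_info_density[OF True] by (simp add: u_def exp_minus field_simps)
    moreover have "1 - u \<le> info_density P Q W z"
      using ln_le_minus_one[of u] by (simp add: u_def)
    ultimately show ?thesis
      using True by (metis mult_left_mono less_imp_le)
  next
    case False
    then show ?thesis
      using W_nonneg[of z] W_le_P[of z] Q_nonneg[of "snd z"]
      by (simp add: info_density_def mult_nonneg_nonneg order_trans)
  qed
  then have "(\<Sum>z\<in>UNIV. W z - P (fst z) * Q (snd z)) \<le> mutual_info P Q W"
    unfolding mutual_info_def by (rule sum_mono)
  moreover have "(\<Sum>z\<in>UNIV. P (fst z) * Q (snd z)) = 1"
    by (simp add: sum_UNIV_prod P_sum Q_sum flip: sum_distrib_left sum_distrib_right)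
  ultimately show ?thesis
    by (simp add: sum_subtractf W_sum)
qed

lemma rel_entropy_eq_mutual_info:
  "rel_entropy W (\<lambda>z. P (fst z) * Q (snd z)) = ereal (mutual_info P Q W)"
proof -
  have pos: "0 < P (fst z) * Q (snd z)" if "0 < W z" for z
    using that W_le_P[of z] W_le_Q[of z] by simp
  have "mutual_info P Q W = (\<Sum>z\<in>UNIV. if 0 < W z then W z * ln (W z / (P (fst z) * Q (snd z))) else 0)"
    unfolding mutual_info_def info_density_def by (intro sum.cong refl) simp
  also have "\<dots> = (\<Sum>z\<in>{z. 0 < W z}. W z * ln (W z / (P (fst z) * Q (snd z))))"
    by (simp add: sum.inter_filter[of UNIV, simplified])
  finally have "mutual_info P Q W = (\<Sum>z\<in>{z. 0 < W z}. W z * ln (W z / (P (fst z) * Q (snd z))))" .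
  moreover have "\<not> (\<exists>z. 0 < W z \<and> P (fst z) * Q (snd z) = 0)"
    using pos by (metis less_irrefl)
  ultimately show ?thesis
    by (simp add: rel_entropy_def)
qed

end

definition diag_coupling :: "('a \<Rightarrow> real) \<Rightarrow> 'a \<times> 'a \<Rightarrow> real" where
  "diag_coupling P z = (if fst z = snd z then P (fst z) else 0)"

lemma diag_coupling_finite_coupling:
  assumes "is_pmf P"
  shows "finite_coupling P P (diag_coupling P)"
  using assms by unfold_locales (auto simp: is_pmf_def diag_coupling_def)

section \<open>Random codes for a fixed coupling\<close>

locale random_coding = finite_coupling P Q W
  for P Q :: "'a::finite \<Rightarrow> real" and W :: "'a \<times> 'a \<Rightarrow> real" +
  fixes \<rho> :: "'a \<Rightarrow> 'a \<Rightarrow> real" and M :: "'a \<Rightarrow> real" and D \<delta> :: real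
  assumes M_pos: "0 < M b" and \<delta>_pos: "0 < \<delta>"
    and distortion: "(\<Sum>z\<in>UNIV. W z * case_prod \<rho> z) < D
      \<or> (0 \<le> D \<and> (\<forall>z. 0 < W z \<longrightarrow> case_prod \<rho> z = 0))"
begin

definition typical :: "nat \<Rightarrow> ('a \<times> 'a) list \<Rightarrow> bool" where
  "typical n zs \<longleftrightarrow>
     sample_mean (case_prod \<rho>) n zs \<le> D \<and>
     sample_mean (info_density P Q W) n zs \<le> mutual_info P Q W + \<delta> \<and>
     sample_mean (\<lambda>z. ln (M (snd z))) n zs \<le> (\<Sum>b\<in>UNIV. Q b * ln (M b)) + \<delta>"

lemma typical_distortion:
  "typical n (zip x y) \<Longrightarrow> length x = n \<Longrightarrow> length y = n \<Longrightarrow> rho_n \<rho> n x y \<le> D"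
  by (simp add: typical_def rho_n_eq_sample_mean)

lemma typical_cost:
  assumes "typical n (zip x y)" "length x = n" "length y = n" "n \<ge> 1"
  shows "(\<Prod>i<n. M (y ! i)) \<le> exp (real n * ((\<Sum>b\<in>UNIV. Q b * ln (M b)) + \<delta>))"
proof -
  have "(\<Prod>i<n. M (y ! i)) = exp (real n * sample_mean (\<lambda>z. ln (M (snd z))) n (zip x y))"
    using assms(2-4) M_pos by (simp add: sample_mean_def exp_sum)
  then show ?thesis
    using assms(1,4) by (simp add: typical_def)
qed

lemma typical_joint_le:
  assumes "typical n (zip x y)" "length x = n" "length y = n" "n \<ge> 1"
  shows "(\<Prod>i<n. W (x ! i, y ! i))
         \<le> exp (real n * (mutual_info P Q W + \<delta>)) * (\<Prod>i<n. P (x ! i)) * (\<Prod>i<n. Q (y ! i))"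
proof (cases "\<forall>i<n. 0 < W (x ! i, y ! i)")
  case True
  have "(\<Prod>i<n. W (x ! i, y ! i))
      = (\<Prod>i<n. P (x ! i) * Q (y ! i) * exp (info_density P Q W (x ! i, y ! i)))"
    using True W_eq_exp_info_density by (intro prod.cong refl) (metis fst_conv snd_conv lessThan_iff)
  also have "\<dots> = exp (real n * sample_mean (info_density P Q W) n (zip x y))
      * (\<Prod>i<n. P (x ! i)) * (\<Prod>i<n. Q (y ! i))"
    using assms(2-4) by (simp add: sample_mean_def prod.distrib exp_sum)
  also have "\<dots> \<le> exp (real n * (mutual_info P Q W + \<delta>)) * (\<Prod>i<n. P (x ! i)) * (\<Prod>i<n. Q (y ! i))"
    using assms(1) P_nonneg Q_nonneg
    by (intro mult_right_mono) (auto simp: typical_def prod_nonneg mult_left_mono)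
  finally show ?thesis .
next
  case False
  then have "(\<Prod>i<n. W (x ! i, y ! i)) = 0"
    using W_nonneg by (metis finite_lessThan lessThan_iff less_eq_real_def prod_zero_iff)
  moreover have "0 \<le> exp (real n * (mutual_info P Q W + \<delta>)) * (\<Prod>i<n. P (x ! i)) * (\<Prod>i<n. Q (y ! i))"
    using P_nonneg Q_nonneg by (simp add: prod_nonneg)
  ultimately show ?thesis
    by linarith
qed

lemma atypical_vanishes: "(\<lambda>n. prod_meas W n {zs \<in> strings n. \<not> typical n zs}) \<longlonglongrightarrow> 0"
proof (rule Lim_null_comparison)
  define A1 where "A1 n = {zs \<in> strings n. D < sample_mean (case_prod \<rho>) n zs}" for n
  define A2 where "A2 n = {zs \<in> strings n.
    \<delta> \<le> \<bar>sample_mean (info_density P Q W) n zs - (\<Sum>z\<in>UNIV. W z * info_density P Q W z)\<bar>}" for n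
  define A3 where "A3 n = {zs :: ('a \<times> 'a) list. zs \<in> strings n \<and>
    \<delta> \<le> \<bar>sample_mean (\<lambda>z. ln (M (snd z))) n zs - (\<Sum>z\<in>UNIV. W z * ln (M (snd z)))\<bar>}" for n
  have finite: "finite (A1 n)" "finite (A2 n)" "finite (A3 n)" for n
    by (simp_all add: A1_def A2_def A3_def finite_strings_Collect)
  have "prod_meas W n {zs \<in> strings n. \<not> typical n zs} \<le> prod_meas W n (A1 n \<union> A2 n \<union> A3 n)" for n
  proof (rule prod_meas_mono[OF W_nonneg])
    show "{zs \<in> strings n. \<not> typical n zs} \<subseteq> A1 n \<union> A2 n \<union> A3 n"
      by (auto simp: typical_def A1_def A2_def A3_def mutual_info_def mean_snd[of "\<lambda>b. ln (M b)"])
  qed (use finite in simp)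
  also have "\<dots> n \<le> prod_meas W n (A1 n) + prod_meas W n (A2 n) + prod_meas W n (A3 n)" for n
    using prod_meas_Un_le[where p = W and n = n and S = "A1 n \<union> A2 n" and T = "A3 n"]
      prod_meas_Un_le[where p = W and n = n and S = "A1 n" and T = "A2 n"] W_nonneg finite
    by simp
  finally have bound: "prod_meas W n {zs \<in> strings n. \<not> typical n zs}
      \<le> prod_meas W n (A1 n) + prod_meas W n (A2 n) + prod_meas W n (A3 n)" for n .
  from bound show "\<forall>\<^sub>F n in sequentially. norm (prod_meas W n {zs \<in> strings n. \<not> typical n zs})
      \<le> prod_meas W n (A1 n) + prod_meas W n (A2 n) + prod_meas W n (A3 n)"
    using W_nonneg by (simp add: prod_meas_nonneg)
  show "(\<lambda>n. prod_meas W n (A1 n) + prod_meas W n (A2 n) + prod_meas W n (A3 n)) \<longlonglongrightarrow> 0"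
    using distortion_exceedance_vanishes[OF is_pmf_W distortion]
      weak_law_of_large_numbers[OF is_pmf_W \<delta>_pos, of "info_density P Q W"]
      weak_law_of_large_numbers[OF is_pmf_W \<delta>_pos, of "\<lambda>z. ln (M (snd z))"]
    unfolding A1_def A2_def A3_def by (intro tendsto_add_zero) auto
qed

lemma random_codebook:
  assumes "n \<ge> 1"
  shows "\<exists>c \<in> {..<N} \<rightarrow>\<^sub>E strings n.
    prod_meas P n {x \<in> strings n. \<forall>j<N. \<not> typical n (zip x (c j))}
    \<le> prod_meas W n {zs \<in> strings n. \<not> typical n zs}
      + exp (- real N / exp (real n * (mutual_info P Q W + \<delta>)))"
  unfolding prod_meas_zip unfolding prod_meas_def
proof (rule random_covering[OF finite_strings finite_strings])
  show "\<forall>y\<in>strings n. 0 \<le> (\<Prod>i<n. Q (y ! i))"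
    using Q_nonneg by (simp add: prod_nonneg)
  show "(\<Sum>y\<in>strings n. \<Prod>i<n. Q (y ! i)) = 1"
    using prod_meas_strings[OF Q_sum] by (simp add: prod_meas_def)
  show "\<forall>x\<in>strings n. \<forall>y\<in>strings n. 0 \<le> (\<Prod>i<n. W (x ! i, y ! i))"
    using W_nonneg by (simp add: prod_nonneg)
  show "\<forall>x\<in>strings n. (\<Sum>y\<in>strings n. \<Prod>i<n. W (x ! i, y ! i)) = (\<Prod>i<n. P (x ! i))"
    using sum_prod_strings[of "\<lambda>i b. W (_ ! i, b)" n] by (simp add: marginal_fst)
  show "(\<Sum>x\<in>strings n. \<Prod>i<n. P (x ! i)) = 1"
    using prod_meas_strings[OF P_sum] by (simp add: prod_meas_def)
  show "1 \<le> exp (real n * (mutual_info P Q W + \<delta>))"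
    using mutual_info_nonneg \<delta>_pos by simp
  show "\<forall>x\<in>strings n. \<forall>y\<in>strings n. typical n (zip x y) \<longrightarrow> (\<Prod>i<n. W (x ! i, y ! i))
      \<le> exp (real n * (mutual_info P Q W + \<delta>)) * (\<Prod>i<n. P (x ! i)) * (\<Prod>i<n. Q (y ! i))"
    using typical_joint_le assms by (simp add: strings_def)
qed

text \<open>About exp(n(I + 2\<delta>)) random codewords, pruned to those of M-cost at most
  exp(n(E_Q ln M + \<delta>)); typical codewords are never pruned.\<close>

lemma codebook_exists:
  assumes "n \<ge> 1"
  shows "\<exists>C \<subseteq> strings n.
    prod_meas M n C \<le> 2 * exp (real n * (mutual_info P Q W + (\<Sum>b\<in>UNIV. Q b * ln (M b)) + 3 * \<delta>))
    \<and> prod_meas P n (strings n - blowup \<rho> n D C)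
      \<le> prod_meas W n {zs \<in> strings n. \<not> typical n zs} + exp (- exp (real n * \<delta>))"
proof -
  define L where "L = exp (real n * (mutual_info P Q W + 2 * \<delta>))"
  define N where "N = nat \<lceil>L\<rceil>"
  define Mb where "Mb = exp (real n * ((\<Sum>b\<in>UNIV. Q b * ln (M b)) + \<delta>))"
  have "1 \<le> L"
    using mutual_info_nonneg \<delta>_pos by (simp add: L_def)
  then have N: "L \<le> real N" "real N \<le> 2 * L"
    using ceiling_correct[of L] by (auto simp: N_def)
  obtain c where c: "c \<in> {..<N} \<rightarrow>\<^sub>E strings n"
    and cover: "prod_meas P n {x \<in> strings n. \<forall>j<N. \<not> typical n (zip x (c j))}
      \<le> prod_meas W n {zs \<in> strings n. \<not> typical n zs}
        + exp (- real N / exp (real n * (mutual_info P Q W + \<delta>)))"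
    using random_codebook[OF assms] by blast
  define C where "C = {y \<in> c ` {..<N}. (\<Prod>i<n. M (y ! i)) \<le> Mb}"
  have "C \<subseteq> strings n"
    using c by (auto simp: C_def)
  moreover have "prod_meas M n C \<le> 2 * exp (real n * (mutual_info P Q W + (\<Sum>b\<in>UNIV. Q b * ln (M b)) + 3 * \<delta>))"
  proof -
    have "card C \<le> card (c ` {..<N})"
      by (rule card_mono) (auto simp: C_def)
    also have "\<dots> \<le> N"
      using card_image_le[of "{..<N}" c] by simp
    finally have "card C \<le> N" .
    have "prod_meas M n C \<le> real (card C) * Mb"
      by (rule prod_meas_le_card) (simp add: C_def)
    also have "\<dots> \<le> real N * Mb"
      using \<open>card C \<le> N\<close> by (intro mult_right_mono) (auto simp: Mb_def)
    also have "\<dots> \<le> 2 * L * Mb"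
      using N by (simp add: Mb_def)
    also have "2 * L * Mb = 2 * exp (real n * (mutual_info P Q W + (\<Sum>b\<in>UNIV. Q b * ln (M b)) + 3 * \<delta>))"
      by (simp add: L_def Mb_def flip: exp_add) (simp add: algebra_simps)
    finally show ?thesis .
  qed
  moreover have "prod_meas P n (strings n - blowup \<rho> n D C)
      \<le> prod_meas W n {zs \<in> strings n. \<not> typical n zs} + exp (- exp (real n * \<delta>))"
  proof -
    have "strings n - blowup \<rho> n D C \<subseteq> {x \<in> strings n. \<forall>j<N. \<not> typical n (zip x (c j))}"
    proof safe
      fix x j assume x: "x \<in> strings n" "x \<notin> blowup \<rho> n D C" and "j < N" "typical n (zip x (c j))"
      moreover have "c j \<in> strings n"
        using c \<open>j < N\<close> by auto
      ultimately have "c j \<in> C" "rho_n \<rho> n x (c j) \<le> D"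
        using typical_cost typical_distortion assms by (auto simp: C_def Mb_def strings_def)
      then show False
        using x by (auto simp: blowup_def)
    qed
    then have "prod_meas P n (strings n - blowup \<rho> n D C)
        \<le> prod_meas P n {x \<in> strings n. \<forall>j<N. \<not> typical n (zip x (c j))}"
      by (intro prod_meas_mono P_nonneg finite_strings_Collect)
    moreover have "exp (- real N / exp (real n * (mutual_info P Q W + \<delta>))) \<le> exp (- exp (real n * \<delta>))"
    proof -
      have "exp (real n * \<delta>) * exp (real n * (mutual_info P Q W + \<delta>)) = L"
        by (simp add: L_def flip: exp_add) (simp add: algebra_simps)
      then show ?thesis
        using N by (simp add: field_simps)
    qed
    ultimately show ?thesis
      using cover by linarith
  qed
  ultimately show ?thesis
    by blast
qed

lemma codes_exist:
  "\<exists>C. (\<forall>n. C n \<subseteq> strings n)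
     \<and> (\<forall>\<^sub>F n in sequentially.
          norm_log_meas M n (C n) \<le> ereal (mutual_info P Q W + (\<Sum>b\<in>UNIV. Q b * ln (M b)) + 4 * \<delta>))
     \<and> (\<lambda>n. prod_meas P n (strings n - blowup \<rho> n D (C n))) \<longlonglongrightarrow> 0"
proof -
  define r where "r = mutual_info P Q W + (\<Sum>b\<in>UNIV. Q b * ln (M b))"
  define admissible where "admissible n C \<longleftrightarrow> C \<subseteq> strings n \<and> (n \<ge> 1 \<longrightarrow>
      prod_meas M n C \<le> 2 * exp (real n * (r + 3 * \<delta>))
    \<and> prod_meas P n (strings n - blowup \<rho> n D C)
      \<le> prod_meas W n {zs \<in> strings n. \<not> typical n zs} + exp (- exp (real n * \<delta>)))" for n C
  have "\<exists>C. admissible n C" for n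
  proof (cases "n \<ge> 1")
    case True
    then show ?thesis
      using codebook_exists[OF True] unfolding admissible_def r_def by blast
  qed (auto simp: admissible_def)
  then obtain C where "admissible n (C n)" for n
    using choice[of admissible] by blast
  then have C: "C n \<subseteq> strings n"
    and codebook: "n \<ge> 1 \<Longrightarrow> prod_meas M n (C n) \<le> 2 * exp (real n * (r + 3 * \<delta>))
      \<and> prod_meas P n (strings n - blowup \<rho> n D (C n))
        \<le> prod_meas W n {zs \<in> strings n. \<not> typical n zs} + exp (- exp (real n * \<delta>))" for n
    unfolding admissible_def by blast+
  have rate_eq: "r + 3 * \<delta> + \<delta> = mutual_info P Q W + (\<Sum>b\<in>UNIV. Q b * ln (M b)) + 4 * \<delta>"
    by (simp add: r_def)
  have rate: "\<forall>\<^sub>F n in sequentially. norm_log_meas M n (C n) \<le> ereal (r + 3 * \<delta> + \<delta>)"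
  proof -
    have "\<forall>\<^sub>F n in sequentially. ln 2 \<le> real n * \<delta>"
      using \<delta>_pos by real_asymp
    then show ?thesis
      using eventually_ge_at_top[of 1]
      by eventually_elim
        (rule norm_log_meas_le_exp[where c = 2], use codebook M_pos in \<open>auto simp: less_imp_le\<close>)
  qed
  have "(\<lambda>n. prod_meas P n (strings n - blowup \<rho> n D (C n))) \<longlonglongrightarrow> 0"
  proof (rule Lim_null_comparison)
    show "\<forall>\<^sub>F n in sequentially. norm (prod_meas P n (strings n - blowup \<rho> n D (C n)))
        \<le> prod_meas W n {zs \<in> strings n. \<not> typical n zs} + exp (- exp (real n * \<delta>))"
      using eventually_ge_at_top[of 1]
      by eventually_elim (use codebook P_nonneg in \<open>simp add: prod_meas_nonneg\<close>)
    have "(\<lambda>n. exp (- exp (real n * \<delta>))) \<longlonglongrightarrow> 0"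
      using \<delta>_pos by real_asymp
    then show "(\<lambda>n. prod_meas W n {zs \<in> strings n. \<not> typical n zs} + exp (- exp (real n * \<delta>))) \<longlonglongrightarrow> 0"
      using atypical_vanishes by (intro tendsto_add_zero)
  qed
  then show ?thesis
    using C rate[unfolded rate_eq] by blast
qed

end

section \<open>Making the distortion constraint strict\<close>

lemma mixture_log_term_le:
  fixes p q t :: real
  assumes "0 < p" "0 \<le> q" "0 < t" "t < 1"
  shows "t * p * ln (t * p / (p * ((1 - t) * q + t * p))) \<le> t * \<bar>p * ln p\<bar>"
proof -
  define X where "X = (1 - t) * q + t * p"
  have "0 < t * p" "t * p \<le> X" "0 < X"
    using assms by (simp_all add: X_def add_nonneg_pos)
  then have "t * p / (p * X) \<le> 1 / p"
    using assms(1) by (simp add: field_simps)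
  then have "t * p / (p * ((1 - t) * q + t * p)) \<le> 1 / p"
    by (simp add: X_def)
  then have "ln (t * p / (p * ((1 - t) * q + t * p))) \<le> ln (1 / p)"
    using assms \<open>0 < X\<close> unfolding X_def by simp
  then have "t * p * ln (t * p / (p * ((1 - t) * q + t * p))) \<le> t * p * ln (1 / p)"
    using \<open>0 < t * p\<close> by (intro mult_left_mono) auto
  also have "\<dots> = t * - (p * ln p)"
    using assms(1) by (simp add: ln_div)
  also have "\<dots> \<le> t * \<bar>p * ln p\<bar>"
    using assms(3) by (intro mult_left_mono) auto
  finally show ?thesis .
qed

context finite_coupling
begin

lemma diagonal_mixture:
  assumes "0 \<le> t" "t \<le> 1" "\<And>a. 0 \<le> P a"
  shows "finite_coupling P (\<lambda>b. (1 - t) * Q b + t * P b) (\<lambda>z. (1 - t) * W z + t * diag_coupling P z)"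
proof unfold_locales
  show "0 \<le> (1 - t) * W z + t * diag_coupling P z" for z
    using assms W_nonneg by (simp add: diag_coupling_def)
  show "(\<Sum>b\<in>UNIV. (1 - t) * W (a, b) + t * diag_coupling P (a, b)) = P a" for a
    by (simp add: sum.distrib marginal_fst diag_coupling_def flip: sum_distrib_left) (simp add: algebra_simps)
  show "(\<Sum>a\<in>UNIV. (1 - t) * W (a, b) + t * diag_coupling P (a, b)) = (1 - t) * Q b + t * P b" for b
    by (simp add: sum.distrib marginal_snd diag_coupling_def flip: sum_distrib_left)
qed (rule P_sum)

lemma diagonal_mixture_distortion:
  assumes "\<And>a. \<rho> a a = 0"
  shows "(\<Sum>z\<in>UNIV. ((1 - t) * W z + t * diag_coupling P z) * case_prod \<rho> z)
       = (1 - t) * (\<Sum>z\<in>UNIV. W z * case_prod \<rho> z)"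
proof -
  have pointwise: "((1 - t) * W z + t * diag_coupling P z) * case_prod \<rho> z
      = (1 - t) * (W z * case_prod \<rho> z)" for z
    using assms by (cases z) (simp add: diag_coupling_def algebra_simps)
  show ?thesis
    by (simp only: pointwise sum_distrib_left)
qed

text \<open>Mixing in a little of the diagonal coupling costs little rate: the summands where W vanishes
  grow at most linearly in the mixing weight, and the others vary continuously.\<close>

lemma diagonal_mixture_mutual_info:
  assumes P_pos: "\<And>a. 0 < P a" and "mutual_info P Q W < c"
  shows "\<forall>\<^sub>F t in at_right 0.
    mutual_info P (\<lambda>b. (1 - t) * Q b + t * P b) (\<lambda>z. (1 - t) * W z + t * diag_coupling P z) < c"
proof -
  define Qt where "Qt t b = (1 - t) * Q b + t * P b" for t b
  define Wt where "Wt t z = (1 - t) * W z + t * diag_coupling P z" for t z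
  define g where "g t z = (if 0 < W z then Wt t z * ln (Wt t z / (P (fst z) * Qt t (snd z)))
    else t * \<bar>P (fst z) * ln (P (fst z))\<bar>)" for t z
  have "isCont (\<lambda>t. g t z) 0" for z
  proof (cases "0 < W z")
    case True
    then have "0 < Q (snd z)"
      using W_le_Q[of z] by linarith
    then show ?thesis
      using True by (simp add: g_def Wt_def Qt_def)
        (intro continuous_intros; use P_pos[of "fst z"] in simp)
  qed (simp add: g_def continuous_intros)
  then have "((\<lambda>t. \<Sum>z\<in>UNIV. g t z) \<longlongrightarrow> (\<Sum>z\<in>UNIV. g 0 z)) (at_right 0)"
    by (intro tendsto_sum) (simp add: isCont_def filterlim_at_split)
  moreover have "(\<Sum>z\<in>UNIV. g 0 z) = mutual_info P Q W"
    unfolding mutual_info_def by (intro sum.cong refl) (simp add: g_def Wt_def Qt_def info_density_def)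
  ultimately have close: "\<forall>\<^sub>F t in at_right 0. (\<Sum>z\<in>UNIV. g t z) < c"
    using assms(2) by (simp add: order_tendstoD)
  have small: "\<forall>\<^sub>F t in at_right 0. 0 < t \<and> t < (1::real)"
    by (simp add: eventually_at_right_field) (meson zero_less_one)
  have bound: "mutual_info P (Qt t) (Wt t) \<le> (\<Sum>z\<in>UNIV. g t z)" if "0 < t" "t < 1" for t
    unfolding mutual_info_def
  proof (intro sum_mono)
    fix z :: "'a \<times> 'a"
    show "Wt t z * info_density P (Qt t) (Wt t) z \<le> g t z"
    proof (cases "0 < W z")
      case True
      then have "0 < Wt t z"
        using that P_pos by (simp add: Wt_def diag_coupling_def add_pos_nonneg less_imp_le)
      then show ?thesis
        using True by (simp add: g_def info_density_def)
    next
      case False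
      then have W0: "W z = 0"
        using W_nonneg[of z] by linarith
      show ?thesis
      proof (cases "fst z = snd z")
        case True
        define a where "a = fst z"
        have "Wt t z = t * P a" "Qt t (snd z) = (1 - t) * Q a + t * P a"
          using W0 True by (simp_all add: Wt_def Qt_def a_def diag_coupling_def)
        then show ?thesis
          using False that mixture_log_term_le[OF P_pos Q_nonneg, of t a a] P_pos[of a]
          by (simp add: g_def info_density_def a_def)
      qed (use W0 that in \<open>simp add: g_def info_density_def Wt_def diag_coupling_def\<close>)
    qed
  qed
  from close small show ?thesis
    unfolding Qt_def[symmetric] Wt_def[symmetric]
    by eventually_elim (use bound in \<open>meson le_less_trans\<close>)
qed

lemma diagonal_mixture_rate:
  assumes P_pos: "\<And>a. 0 < P a" and rate: "mutual_info P Q W + (\<Sum>b\<in>UNIV. Q b * ln (M b)) < r"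
  obtains t where "0 < t" "t < 1"
    "mutual_info P (\<lambda>b. (1 - t) * Q b + t * P b) (\<lambda>z. (1 - t) * W z + t * diag_coupling P z)
      + (\<Sum>b\<in>UNIV. ((1 - t) * Q b + t * P b) * ln (M b)) < r"
proof -
  define \<eta> where "\<eta> = r - (mutual_info P Q W + (\<Sum>b\<in>UNIV. Q b * ln (M b)))"
  have "\<eta> > 0"
    using rate by (simp add: \<eta>_def)
  have "\<forall>\<^sub>F t in at_right 0. mutual_info P (\<lambda>b. (1 - t) * Q b + t * P b)
      (\<lambda>z. (1 - t) * W z + t * diag_coupling P z) < mutual_info P Q W + \<eta> / 2"
    using P_pos \<open>\<eta> > 0\<close> by (intro diagonal_mixture_mutual_info) auto
  moreover have "\<forall>\<^sub>F t in at_right 0.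
      (\<Sum>b\<in>UNIV. ((1 - t) * Q b + t * P b) * ln (M b)) < (\<Sum>b\<in>UNIV. Q b * ln (M b)) + \<eta> / 2"
  proof -
    have "((\<lambda>t. \<Sum>b\<in>UNIV. ((1 - t) * Q b + t * P b) * ln (M b))
        \<longlongrightarrow> (\<Sum>b\<in>UNIV. ((1 - 0) * Q b + 0 * P b) * ln (M b))) (at_right 0)"
      by (intro tendsto_intros)
    then show ?thesis
      using \<open>\<eta> > 0\<close> by (simp add: order_tendstoD)
  qed
  moreover have "\<forall>\<^sub>F t in at_right 0. 0 < t \<and> t < (1::real)"
    by (simp add: eventually_at_right_field) (meson zero_less_one)
  ultimately have "\<forall>\<^sub>F t in at_right 0. 0 < t \<and> t < 1 \<and>
      mutual_info P (\<lambda>b. (1 - t) * Q b + t * P b) (\<lambda>z. (1 - t) * W z + t * diag_coupling P z)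
      + (\<Sum>b\<in>UNIV. ((1 - t) * Q b + t * P b) * ln (M b)) < r"
    by eventually_elim (use \<eta>_def in \<open>intro conjI; linarith\<close>)
  then show ?thesis
    using that eventually_happens'[OF trivial_limit_at_right_real] by blast
qed

lemma zero_distortion_support:
  assumes "\<And>x y. 0 \<le> \<rho> x y" and "(\<Sum>z\<in>UNIV. W z * case_prod \<rho> z) \<le> 0" and "0 < W z"
  shows "case_prod \<rho> z = 0"
proof -
  have nonneg: "0 \<le> W z * case_prod \<rho> z" for z
    using W_nonneg assms(1) by (simp add: split_beta)
  then have "(\<Sum>z\<in>UNIV. W z * case_prod \<rho> z) = 0"
    using assms(2) sum_nonneg[of UNIV "\<lambda>z. W z * case_prod \<rho> z"] by simp
  then have "\<forall>z\<in>UNIV. W z * case_prod \<rho> z = 0"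
    using sum_nonneg_eq_0_iff[of UNIV "\<lambda>z. W z * case_prod \<rho> z"] nonneg by simp
  then show ?thesis
    using assms(3) by (metis UNIV_I mult_eq_0_iff less_irrefl)
qed

lemma strict_distortion_coupling:
  assumes P_pos: "\<And>a. 0 < P a" and \<rho>_nonneg: "\<And>x y. 0 \<le> \<rho> x y" and \<rho>_diag: "\<And>a. \<rho> a a = 0"
    and "0 \<le> D" and distortion: "(\<Sum>z\<in>UNIV. W z * case_prod \<rho> z) \<le> D"
    and rate: "mutual_info P Q W + (\<Sum>b\<in>UNIV. Q b * ln (M b)) < r"
  shows "\<exists>Q' W'. finite_coupling P Q' W'
    \<and> ((\<Sum>z\<in>UNIV. W' z * case_prod \<rho> z) < D \<or> (0 \<le> D \<and> (\<forall>z. 0 < W' z \<longrightarrow> case_prod \<rho> z = 0)))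
    \<and> mutual_info P Q' W' + (\<Sum>b\<in>UNIV. Q' b * ln (M b)) < r"
proof (cases "D = 0")
  case True
  then have "\<forall>z. 0 < W z \<longrightarrow> case_prod \<rho> z = 0"
    using zero_distortion_support[where \<rho> = \<rho>, OF \<rho>_nonneg] distortion True by auto
  then show ?thesis
    using finite_coupling_axioms rate True by blast
next
  case False
  obtain t where t: "0 < t" "t < 1"
    and rate': "mutual_info P (\<lambda>b. (1 - t) * Q b + t * P b) (\<lambda>z. (1 - t) * W z + t * diag_coupling P z)
      + (\<Sum>b\<in>UNIV. ((1 - t) * Q b + t * P b) * ln (M b)) < r"
    using diagonal_mixture_rate[OF P_pos rate] by blast
  have "finite_coupling P (\<lambda>b. (1 - t) * Q b + t * P b) (\<lambda>z. (1 - t) * W z + t * diag_coupling P z)"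
    using t P_pos by (intro diagonal_mixture) (auto intro: less_imp_le)
  moreover have "(\<Sum>z\<in>UNIV. ((1 - t) * W z + t * diag_coupling P z) * case_prod \<rho> z) < D"
  proof -
    have "(\<Sum>z\<in>UNIV. ((1 - t) * W z + t * diag_coupling P z) * case_prod \<rho> z)
        = (1 - t) * (\<Sum>z\<in>UNIV. W z * case_prod \<rho> z)"
      by (rule diagonal_mixture_distortion) (rule \<rho>_diag)
    also have "\<dots> \<le> (1 - t) * D"
      using t distortion by (intro mult_left_mono) auto
    also have "\<dots> < D"
      using t False \<open>0 \<le> D\<close> by simp
    finally show ?thesis .
  qed
  ultimately show ?thesis
    using rate' by blast
qed

end

section \<open>From the rate-distortion function to codes\<close>

lemma couplings_finite_coupling:
  assumes "W \<in> couplings P Q \<rho> D"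
  shows "finite_coupling P Q W"
proof unfold_locales
  have "is_pmf W" "\<forall>a. (\<Sum>b\<in>UNIV. W (a, b)) = P a"
    using assms by (simp_all add: couplings_def)
  then show "(\<Sum>a\<in>UNIV. P a) = 1"
    by (simp add: is_pmf_def sum_UNIV_prod)
qed (use assms in \<open>auto simp: couplings_def is_pmf_def\<close>)

lemma R_fun_less_PInf:
  assumes "is_pmf P" and "\<And>a. \<rho> a a = 0" and "0 \<le> D"
  shows "R_fun P \<rho> M D < \<infinity>"
proof -
  interpret diag: finite_coupling P P "diag_coupling P"
    using assms(1) by (rule diag_coupling_finite_coupling)
  have "(\<Sum>z\<in>UNIV. diag_coupling P z * case_prod \<rho> z) = 0"
    using assms(2) by (intro sum.neutral) (auto simp: diag_coupling_def)
  then have "diag_coupling P \<in> couplings P P \<rho> D"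
    using diag.is_pmf_W diag.marginal_fst diag.marginal_snd assms(3)
    by (simp add: couplings_def split_beta)
  then have "I_PQD P P \<rho> D \<le> ereal (mutual_info P P (diag_coupling P))"
    unfolding I_PQD_def diag.rel_entropy_eq_mutual_info[symmetric] by (rule INF_lower)
  then have "I_PQD P P \<rho> D + ereal (\<Sum>b\<in>UNIV. P b * ln (M b))
      \<le> ereal (mutual_info P P (diag_coupling P)) + ereal (\<Sum>b\<in>UNIV. P b * ln (M b))"
    by (rule add_right_mono)
  moreover have "R_fun P \<rho> M D \<le> I_PQD P P \<rho> D + ereal (\<Sum>b\<in>UNIV. P b * ln (M b))"
    unfolding R_fun_def using assms(1) by (intro INF_lower) simp
  ultimately have "R_fun P \<rho> M D \<le> ereal (mutual_info P P (diag_coupling P) + (\<Sum>b\<in>UNIV. P b * ln (M b)))"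
    by simp
  then show ?thesis
    by (rule le_less_trans) simp
qed

lemma R_fun_less_imp_coupling:
  assumes "R_fun P \<rho> M D < ereal r"
  shows "\<exists>Q W. W \<in> couplings P Q \<rho> D \<and> mutual_info P Q W + (\<Sum>b\<in>UNIV. Q b * ln (M b)) < r"
proof -
  obtain Q where "is_pmf Q" and Q: "I_PQD P Q \<rho> D + ereal (\<Sum>b\<in>UNIV. Q b * ln (M b)) < ereal r"
    using assms unfolding R_fun_def INF_less_iff by auto
  then have "I_PQD P Q \<rho> D < ereal (r - (\<Sum>b\<in>UNIV. Q b * ln (M b)))"
    by (cases "I_PQD P Q \<rho> D") auto
  then obtain W where W: "W \<in> couplings P Q \<rho> D"
    and "rel_entropy W (\<lambda>z. P (fst z) * Q (snd z)) < ereal (r - (\<Sum>b\<in>UNIV. Q b * ln (M b)))"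
    unfolding I_PQD_def INF_less_iff by auto
  then show ?thesis
    using finite_coupling.rel_entropy_eq_mutual_info[OF couplings_finite_coupling[OF W]]
    by (intro exI[of _ Q] exI[of _ W]) auto
qed

lemma rate_achievable:
  fixes P :: "'a::finite \<Rightarrow> real"
  assumes "\<And>a. 0 < P a" and "\<And>x y. 0 \<le> \<rho> x y" and "\<And>a. \<rho> a a = 0" and "\<And>b. 0 < M b"
    and "0 \<le> D" and "R_fun P \<rho> M D < ereal r"
  shows "\<exists>C. (\<forall>n. C n \<subseteq> strings n)
    \<and> (\<forall>\<^sub>F n in sequentially. norm_log_meas M n (C n) \<le> ereal r)
    \<and> (\<lambda>n. prod_meas P n (strings n - blowup \<rho> n D (C n))) \<longlonglongrightarrow> 0"
proof -
  obtain Q W where W: "W \<in> couplings P Q \<rho> D"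
    and rate: "mutual_info P Q W + (\<Sum>b\<in>UNIV. Q b * ln (M b)) < r"
    using R_fun_less_imp_coupling[OF assms(6)] by blast
  interpret finite_coupling P Q W
    using W by (rule couplings_finite_coupling)
  have "(\<Sum>z\<in>UNIV. W z * case_prod \<rho> z) \<le> D"
    using W by (simp add: couplings_def split_beta)
  then obtain Q' W' where "finite_coupling P Q' W'"
    and distortion: "(\<Sum>z\<in>UNIV. W' z * case_prod \<rho> z) < D
      \<or> (0 \<le> D \<and> (\<forall>z. 0 < W' z \<longrightarrow> case_prod \<rho> z = 0))"
    and rate': "mutual_info P Q' W' + (\<Sum>b\<in>UNIV. Q' b * ln (M b)) < r"
    using strict_distortion_coupling[where \<rho> = \<rho> and D = D, OF assms(1-3,5) _ rate] by blast
  define \<delta> where "\<delta> = (r - (mutual_info P Q' W' + (\<Sum>b\<in>UNIV. Q' b * ln (M b)))) / 4"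
  interpret random_coding P Q' W' \<rho> M D \<delta>
    using \<open>finite_coupling P Q' W'\<close> distortion rate' assms(4)
    by (simp add: random_coding_def random_coding_axioms_def \<delta>_def)
  have "mutual_info P Q' W' + (\<Sum>b\<in>UNIV. Q' b * ln (M b)) + 4 * \<delta> = r"
    by (simp add: \<delta>_def field_simps)
  then show ?thesis
    using codes_exist by simp
qed

section \<open>Diagonal sequences\<close>

lemma diagonal_selection:
  fixes Pr :: "nat \<Rightarrow> nat \<Rightarrow> 'c \<Rightarrow> bool" and C :: "nat \<Rightarrow> nat \<Rightarrow> 'c"
  assumes eventually: "\<And>k. \<forall>\<^sub>F n in sequentially. Pr k n (C k n)"
    and antimono: "\<And>k k' n c. k \<le> k' \<Longrightarrow> Pr k' n c \<Longrightarrow> Pr k n c"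
  shows "\<exists>\<kappa>. \<forall>k. \<forall>\<^sub>F n in sequentially. Pr k n (C (\<kappa> n) n)"
proof -
  obtain N where N: "\<And>k n. N k \<le> n \<Longrightarrow> Pr k n (C k n)"
    using eventually unfolding eventually_sequentially by metis
  define \<kappa> where "\<kappa> n = Max {j. j \<le> n \<and> N j \<le> n}" for n
  have "Pr k n (C (\<kappa> n) n)" if "N k + k \<le> n" for k n
  proof -
    have k: "k \<in> {j. j \<le> n \<and> N j \<le> n}"
      using that by simp
    have fin: "finite {j. j \<le> n \<and> N j \<le> n}"
      by simp
    have "\<kappa> n \<in> {j. j \<le> n \<and> N j \<le> n}"
      unfolding \<kappa>_def using Max_in[OF fin] k by blast
    moreover have "k \<le> \<kappa> n"
      unfolding \<kappa>_def using Max_ge[OF fin k] .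
    ultimately show ?thesis
      using N antimono by blast
  qed
  then show ?thesis
    unfolding eventually_sequentially by blast
qed

lemma ereal_decseq_approx_from_above:
  fixes R :: ereal
  assumes "R < \<infinity>"
  obtains a :: "nat \<Rightarrow> real" where "decseq a" "\<And>k. R < ereal (a k)" "\<And>y. R < y \<Longrightarrow> \<exists>k. ereal (a k) < y"
proof -
  define A where "A = ereal ` {r. R < ereal r}"
  have "A \<noteq> {}"
    using assms by (auto simp: A_def less_PInf_Ex_of_nat)
  then obtain f where f: "decseq f" "range f \<subseteq> A" "Inf A = (INF k. f k)"
    using Inf_countable_INF by blast
  define a where "a k = real_of_ereal (f k)" for k
  have fa: "f k = ereal (a k)" and Ra: "R < ereal (a k)" for k
  proof -
    obtain r where "f k = ereal r" "R < ereal r"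
      using f(2) by (auto simp: A_def)
    then show "f k = ereal (a k)" "R < ereal (a k)"
      by (simp_all add: a_def)
  qed
  have "decseq a"
    using f(1) by (simp add: decseq_def fa)
  moreover have "\<exists>k. ereal (a k) < y" if "R < y" for y
  proof -
    obtain r where "R < ereal r" "ereal r < y"
      using ereal_dense2[OF \<open>R < y\<close>] by blast
    then have "(INF k. f k) < y"
      using f(3) Inf_lower[of "ereal r" A] by (simp add: A_def order.strict_trans1)
    then show ?thesis
      by (simp add: INF_less_iff fa)
  qed
  ultimately show ?thesis
    using that Ra by blast
qed

lemma diagonal_limsup:
  fixes f :: "nat \<Rightarrow> 'c \<Rightarrow> ereal" and g :: "nat \<Rightarrow> 'c \<Rightarrow> real"
  assumes "R < \<infinity>"
    and achievable: "\<And>r. R < ereal r \<Longrightarrow> \<exists>C. (\<forall>n. C n \<in> S n)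
      \<and> (\<forall>\<^sub>F n in sequentially. f n (C n) \<le> ereal r) \<and> (\<lambda>n. g n (C n)) \<longlonglongrightarrow> 0"
  shows "\<exists>C. (\<forall>n. C n \<in> S n) \<and> limsup (\<lambda>n. f n (C n)) \<le> R \<and> (\<lambda>n. g n (C n)) \<longlonglongrightarrow> 0"
proof -
  obtain a where a: "decseq a" "\<And>k. R < ereal (a k)" "\<And>y. R < y \<Longrightarrow> \<exists>k. ereal (a k) < y"
    using ereal_decseq_approx_from_above[OF assms(1)] by blast
  obtain Cs where Cs: "\<And>k n. Cs k n \<in> S n" "\<And>k. \<forall>\<^sub>F n in sequentially. f n (Cs k n) \<le> ereal (a k)"
    "\<And>k. (\<lambda>n. g n (Cs k n)) \<longlonglongrightarrow> 0"
    using achievable[OF a(2)] by metis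
  define Pr where "Pr k n c \<longleftrightarrow> f n c \<le> ereal (a k) \<and> \<bar>g n c\<bar> < inverse (real (Suc k))" for k n c
  have "\<forall>\<^sub>F n in sequentially. Pr k n (Cs k n)" for k
  proof -
    have "\<forall>\<^sub>F n in sequentially. \<bar>g n (Cs k n)\<bar> < inverse (real (Suc k))"
      using Cs(3)[of k, THEN tendsto_rabs_zero] by (rule order_tendstoD) simp
    with Cs(2)[of k] show ?thesis
      unfolding Pr_def by eventually_elim simp
  qed
  moreover have "Pr k n c" if "k \<le> k'" "Pr k' n c" for k k' n c
  proof -
    have "ereal (a k') \<le> ereal (a k)" "inverse (real (Suc k')) \<le> inverse (real (Suc k))"
      using a(1) that(1) by (simp_all add: decseqD le_imp_inverse_le)
    then show ?thesis
      using that(2) unfolding Pr_def by (meson order_trans less_le_trans)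
  qed
  ultimately obtain \<kappa> where \<kappa>: "\<And>k. \<forall>\<^sub>F n in sequentially. Pr k n (Cs (\<kappa> n) n)"
    using diagonal_selection[of Pr Cs] by blast
  define C where "C n = Cs (\<kappa> n) n" for n
  have "limsup (\<lambda>n. f n (C n)) \<le> R"
    unfolding Limsup_le_iff
  proof (intro allI impI)
    fix y assume "R < y"
    then obtain k where k: "ereal (a k) < y"
      using a(3) by blast
    from \<kappa>[of k] show "\<forall>\<^sub>F n in sequentially. f n (C n) < y"
      unfolding C_def Pr_def by eventually_elim (use k in auto)
  qed
  moreover have "(\<lambda>n. g n (C n)) \<longlonglongrightarrow> 0"
  proof (rule tendstoI)
    fix \<epsilon> :: real assume "0 < \<epsilon>"
    then obtain k where k: "inverse (real (Suc k)) < \<epsilon>"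
      using reals_Archimedean by blast
    from \<kappa>[of k] show "\<forall>\<^sub>F n in sequentially. dist (g n (C n)) 0 < \<epsilon>"
      unfolding C_def Pr_def by eventually_elim (use k in auto)
  qed
  moreover have "\<forall>n. C n \<in> S n"
    using Cs(1) by (simp add: C_def)
  ultimately show ?thesis
    by blast
qed

section \<open>Expected distortion and achievability\<close>

lemma rho_n_le_Max:
  fixes \<rho> :: "'a::finite \<Rightarrow> 'a \<Rightarrow> real"
  assumes "n \<ge> 1"
  shows "rho_n \<rho> n x y \<le> Max (range (case_prod \<rho>))"
proof -
  have "(\<Sum>i<n. \<rho> (x ! i) (y ! i)) \<le> (\<Sum>i<n. Max (range (case_prod \<rho>)))"
    by (intro sum_mono Max_ge) auto
  then show ?thesis
    using assms by (simp add: rho_n_def field_simps)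
qed

lemma exp_dist_le:
  fixes P :: "'a::finite \<Rightarrow> real"
  assumes "is_pmf P" "n \<ge> 1" "C \<noteq> {}" "0 \<le> D"
  shows "exp_dist P \<rho> n C
    \<le> ereal (D + Max (range (case_prod \<rho>)) * prod_meas P n (strings n - blowup \<rho> n D C))"
proof -
  define B where "B = blowup \<rho> n D C"
  define \<rho>max where "\<rho>max = Max (range (case_prod \<rho>))"
  define Pn where "Pn x = (\<Prod>i<n. P (x ! i))" for x :: "'a list"
  define bound where "bound x = (if x \<in> B then D else \<rho>max)" for x
  have Pn_nonneg: "0 \<le> Pn x" for x
    using assms(1) by (simp add: Pn_def is_pmf_def prod_nonneg)
  have "rho_n_set \<rho> n x C \<le> ereal (bound x)" for x
  proof -
    obtain y where "y \<in> C" "rho_n \<rho> n x y \<le> bound x"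
    proof (cases "x \<in> B")
      case True
      then show ?thesis
        using that by (auto simp: B_def blowup_def bound_def)
    next
      case False
      obtain y where "y \<in> C"
        using assms(3) by blast
      then show ?thesis
        using that False rho_n_le_Max[OF assms(2), of \<rho> x y] by (simp add: bound_def \<rho>max_def)
    qed
    then show ?thesis
      unfolding rho_n_set_def by (simp add: INF_lower2)
  qed
  then have "exp_dist P \<rho> n C \<le> (\<Sum>x\<in>strings n. ereal (Pn x) * ereal (bound x))"
    unfolding exp_dist_def Pn_def[symmetric]
    by (intro sum_mono ereal_mult_left_mono) (simp_all add: Pn_nonneg)
  also have "\<dots> = ereal (\<Sum>x\<in>strings n. Pn x * bound x)"
    by (simp add: sum_ereal)
  also have "(\<Sum>x\<in>strings n. Pn x * bound x)
      \<le> (\<Sum>x\<in>strings n. D * Pn x + \<rho>max * (if x \<notin> B then Pn x else 0))"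
    using Pn_nonneg assms(4) by (intro sum_mono) (auto simp: bound_def)
  also have "\<dots> = D + \<rho>max * prod_meas P n (strings n - B)"
  proof -
    have "(\<Sum>x\<in>strings n. Pn x) = 1"
      using prod_meas_strings[of P n] assms(1) by (simp add: prod_meas_def Pn_def is_pmf_def)
    moreover have "strings n - B = {x \<in> strings n. x \<notin> B}"
      by blast
    then have "prod_meas P n (strings n - B) = (\<Sum>x\<in>strings n. if x \<notin> B then Pn x else 0)"
      unfolding prod_meas_def Pn_def by (simp add: sum.inter_filter[OF finite_strings])
    ultimately show ?thesis
      by (simp add: sum.distrib flip: sum_distrib_left)
  qed
  finally show ?thesis
    by (simp add: B_def \<rho>max_def)
qed

lemma exp_dist_limsup_le:
  fixes P :: "'a::finite \<Rightarrow> real"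
  assumes "is_pmf P" "0 \<le> D"
    and miss: "(\<lambda>n. prod_meas P n (strings n - blowup \<rho> n D (C n))) \<longlonglongrightarrow> 0"
  shows "limsup (\<lambda>n. exp_dist P \<rho> n (C n)) \<le> ereal D"
proof -
  define \<rho>max where "\<rho>max = Max (range (case_prod \<rho>))"
  have P1: "(\<Sum>a\<in>UNIV. P a) = 1"
    using assms(1) by (simp add: is_pmf_def)
  have nonempty: "C n \<noteq> {}" if "prod_meas P n (strings n - blowup \<rho> n D (C n)) < 1" for n
    using that prod_meas_strings[OF P1, of n] by (auto simp: blowup_def)
  have "\<forall>\<^sub>F n in sequentially. C n \<noteq> {}"
    using order_tendstoD(2)[OF miss zero_less_one] by (rule eventually_mono) (rule nonempty)
  then have "\<forall>\<^sub>F n in sequentially.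
      exp_dist P \<rho> n (C n) \<le> ereal (D + \<rho>max * prod_meas P n (strings n - blowup \<rho> n D (C n)))"
    using eventually_ge_at_top[of 1]
    by eventually_elim (use exp_dist_le assms(1,2) in \<open>simp add: \<rho>max_def\<close>)
  then have "limsup (\<lambda>n. exp_dist P \<rho> n (C n))
      \<le> limsup (\<lambda>n. ereal (D + \<rho>max * prod_meas P n (strings n - blowup \<rho> n D (C n))))"
    by (rule Limsup_mono)
  also have "\<dots> = ereal D"
    using miss by (intro lim_imp_Limsup tendsto_ereal) (auto intro!: tendsto_eq_intros)
  finally show ?thesis .
qed

theorem mainTheorem3:
  fixes P :: "'a::finite \<Rightarrow> real" and \<rho> :: "'a \<Rightarrow> 'a \<Rightarrow> real"
    and M :: "'a \<Rightarrow> real" and D :: real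
  assumes "is_pmf P" and "\<forall>a. P a > 0"
    and "\<forall>x y. \<rho> x y \<ge> 0"
    and "\<forall>a. M a > 0"
    and "\<forall>x y. \<rho> x y = 0 \<longleftrightarrow> x = y"
    and "D \<ge> 0"
  shows "\<exists>C :: nat \<Rightarrow> 'a list set.
     (\<forall>n. C n \<subseteq> strings n) \<and>
     limsup (\<lambda>n. norm_log_meas M n (C n)) \<le> R_fun P \<rho> M D \<and>
     (\<lambda>n. \<Sum>xs\<in>blowup \<rho> n D (C n). \<Prod>i<n. P (xs ! i)) \<longlonglongrightarrow> 1 \<and>
     limsup (\<lambda>n. exp_dist P \<rho> n (C n)) \<le> ereal D"
proof -
  have \<rho>_diag: "\<And>a. \<rho> a a = 0"
    using assms(5) by simp
  have "\<exists>C. (\<forall>n. C n \<in> Pow (strings n))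
      \<and> (\<forall>\<^sub>F n in sequentially. norm_log_meas M n (C n) \<le> ereal r)
      \<and> (\<lambda>n. prod_meas P n (strings n - blowup \<rho> n D (C n))) \<longlonglongrightarrow> 0"
    if "R_fun P \<rho> M D < ereal r" for r
    using rate_achievable[of P \<rho> M D r] assms \<rho>_diag that by simp
  then obtain C where C: "\<forall>n. C n \<in> Pow (strings n)"
    and rate: "limsup (\<lambda>n. norm_log_meas M n (C n)) \<le> R_fun P \<rho> M D"
    and miss: "(\<lambda>n. prod_meas P n (strings n - blowup \<rho> n D (C n))) \<longlonglongrightarrow> 0"
    using diagonal_limsup[OF R_fun_less_PInf[where \<rho> = \<rho>, OF assms(1) \<rho>_diag assms(6)],
        where S = "\<lambda>n. Pow (strings n)" and f = "\<lambda>n. norm_log_meas M n"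
        and g = "\<lambda>n C. prod_meas P n (strings n - blowup \<rho> n D C)"]
    by blast
  have "prod_meas P n (blowup \<rho> n D (C n)) = 1 - prod_meas P n (strings n - blowup \<rho> n D (C n))" for n
    using prod_meas_Diff[of P "blowup \<rho> n D (C n)" n] assms(1) by (auto simp: is_pmf_def blowup_def)
  then have "(\<lambda>n. \<Sum>xs\<in>blowup \<rho> n D (C n). \<Prod>i<n. P (xs ! i)) \<longlonglongrightarrow> 1"
    using tendsto_diff[OF tendsto_const miss, of 1] by (simp add: prod_meas_def)
  then show ?thesis
    using C rate exp_dist_limsup_le[OF assms(1,6) miss] by blast
qed

end
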